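(* Let $\mathcal{I}$ be an ideal on $\omega$ (containing $\mathrm{fin}$) which is $F_\sigma$, or which is (an isomorphic copy on $\omega$ of) $\mathrm{fin}^\alpha$ for some $\alpha < \omega_1$. Then $\mathcal{I}$ is uniformly weakly $P^+$.
   Context: $\mathrm{fin}$ is the ideal of finite subsets of $\omega$; $\mathcal{I}^+$ denotes subsets not in $\mathcal{I}$; $A \subseteq_{\mathcal{I}} B$ means $A\setminus B \in \mathcal{I}$. $F_\sigma$ refers to $\mathcal{I}$ as a subset of $2^\omega$. Ideals $\mathcal{I}$ on $\Omega$ and $\mathcal{J}$ on $\Omega'$ are isomorphic if there is a bijection $f:\Omega\to\Omega'$ with $A \in \mathcal{J} \iff f^{-1}(A) \in \mathcal{I}$ for all $A \subseteq \Omega'$. The ideals $\mathrm{fin}^\alpha$ on countable sets $X^\alpha$ ($1\le\alpha<\omega_1$) are defined recursively: $\mathrm{fin}^1 = \mathrm{fin}$ on $X^1=\omega$; $\mathrm{fin}^{\alpha+1}$ is the ideal on $X^{\alpha+1} = \omega \times X^\alpha$ given by $A \in \mathrm{fin}^{\alpha+1}$ iff $\{n : (A)_n \notin \mathrm{fin}^\alpha\}$ is finite, where $(A)_n = \{y : (n,y)\in A\}$; for limit $\alpha$, fixing a strictly increasing sequence $\alpha_n$ with supremum $\alpha$, $\mathrm{fin}^\alpha$ is the ideal on $X^\alpha = \bigcup_n \{n\}\times X^{\alpha_n}$ given by $A \in \mathrm{fin}^\alpha$ iff $\{n : A \cap (\{n\}\times X^{\alpha_n}) \notin \mathrm{fin}^{\alpha_n}\}$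 is finite (identifying $\{n\}\times X^{\alpha_n}$ with $X^{\alpha_n}$). $\mathcal{I}$ is uniformly weakly $P^+$ if there is a Borel function $\Phi$ such that for every $\subseteq$-decreasing sequence $\langle A_n : n\in\omega\rangle$ of $\mathcal{I}$-positive sets, $\Phi(\langle A_n\rangle)\in\mathcal{I}^+$ and $\Phi(\langle A_n\rangle)\subseteq_{\mathcal{I}} A_n$ for every $n$. *)

theory Defs
  imports "HOL-Analysis.Analysis"
begin

section \<open>Cantor space 2^omega, identified with nat \<Rightarrow> bool (product of discrete bool)\<close>

definition chi :: "nat set \<Rightarrow> (nat \<Rightarrow> bool)" where
  "chi A = (\<lambda>n. n \<in> A)"

definition ideal_on :: "'a set \<Rightarrow> 'a set set \<Rightarrow> bool" where
  "ideal_on X I \<longleftrightarrow> I \<subseteq> Pow X \<and> {} \<in> I \<and> X \<notin> I \<and>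
     (\<forall>A B. A \<in> I \<longrightarrow> B \<subseteq> A \<longrightarrow> B \<in> I) \<and>
     (\<forall>A B. A \<in> I \<longrightarrow> B \<in> I \<longrightarrow> A \<union> B \<in> I)"

definition contains_fin :: "nat set set \<Rightarrow> bool" where
  "contains_fin I \<longleftrightarrow> (\<forall>A. finite A \<longrightarrow> A \<in> I)"

definition ideal_iso :: "'a set \<Rightarrow> 'a set set \<Rightarrow> 'b set \<Rightarrow> 'b set set \<Rightarrow> bool" where
  "ideal_iso \<Omega> I \<Omega>' J \<longleftrightarrow> (\<exists>f. bij_betw f \<Omega> \<Omega>' \<and>
     (\<forall>A. A \<subseteq> \<Omega>' \<longrightarrow> (A \<in> J \<longleftrightarrow> f -` A \<inter> \<Omega> \<in> I)))"

text \<open>Countable ordinals alpha are represented by well-orders r on subsets of nat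
  (compared with the library's ordinal comparisons <o, \<le>o, =o).  The carriers X^alpha
  are realised as sets of finite lists of naturals: X^1 = {[n]}, and a point (n,y) of
  omega \<times> X^alpha (resp. of {n} \<times> X^{alpha_n}) is the list n # y.
  \<open>fin_pow r X J\<close> means: X = X^alpha and J = fin^alpha, where alpha is the order type
  of r, for some choice of the fundamental sequences at limit stages.\<close>

definition section_of :: "nat list set \<Rightarrow> nat \<Rightarrow> nat list set" where
  "section_of A n = {y. n # y \<in> A}"

inductive fin_pow :: "nat rel \<Rightarrow> nat list set \<Rightarrow> nat list set set \<Rightarrow> bool" where
  one: "\<lbrakk>Well_order r; card (Field r) = 1\<rbrakk> \<Longrightarrow>
        fin_pow r (range (\<lambda>n. [n])) {A. A \<subseteq> range (\<lambda>n. [n]) \<and> finite A}"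
| succ: "\<lbrakk>fin_pow r X J; Well_order r'; m \<in> Field r'; \<forall>x\<in>Field r'. (x, m) \<in> r';
          (Restr r' (Field r' - {m}), r) \<in> ordIso\<rbrakk> \<Longrightarrow>
        fin_pow r' (\<Union>n. (\<lambda>y. n # y) ` X)
          {A. A \<subseteq> (\<Union>n. (\<lambda>y. n # y) ` X) \<and> finite {n. section_of A n \<notin> J}}"
| limit: "\<lbrakk>\<forall>n. fin_pow (s n) (X n) (J n); \<forall>n. (s n, s (Suc n)) \<in> ordLess;
           Well_order r; \<forall>n. (s n, r) \<in> ordLess; \<forall>t::nat rel. (t, r) \<in> ordLess \<longrightarrow> (\<exists>n. (t, s n) \<in> ordLeq)\<rbrakk> \<Longrightarrow>
        fin_pow r (\<Union>n. (\<lambda>y. n # y) ` X n)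
          {A. A \<subseteq> (\<Union>n. (\<lambda>y. n # y) ` X n) \<and> finite {n. section_of A n \<notin> J n}}"

definition uniformly_weakly_Pplus :: "nat set set \<Rightarrow> bool" where
  "uniformly_weakly_Pplus I \<longleftrightarrow>
     (\<exists>\<Phi> :: (nat \<Rightarrow> nat \<Rightarrow> bool) \<Rightarrow> (nat \<Rightarrow> bool).
        \<Phi> \<in> borel_measurable borel \<and>
        (\<forall>A :: nat \<Rightarrow> nat set.
           (\<forall>n. A n \<notin> I) \<and> (\<forall>n. A (Suc n) \<subseteq> A n) \<longrightarrow>
             (let B = {k. \<Phi> (\<lambda>n. chi (A n)) k} in
                B \<notin> I \<and> (\<forall>n. B - A n \<in> I))))"

end

theory Submission
  imports Defs
begin

(* Both kinds of ideals are built from countably many simple pieces, and the witness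
   B = Phi(A_0, A_1, ...) collects suitable pieces of the A_n along a diagonal; every bit
   of B depends on the input through a Borel condition.

   An F_sigma ideal is the union of hereditary families K_m: the sets all of whose finite
   initial segments lie below a point of the m-th closed set (by compactness of the Cantor
   space these sets are in the ideal). Let B be the union over n of the shortest initial
   segment of A_n - {0..n-1} outside K_n. Then B is in no K_m, and B - A_n is finite.

   Up to isomorphism, fin^alpha is a Fubini sum of smaller ideals over disjoint blocks S_m,
   and membership in each summand is Borel. Choose blocks m_0 < m_1 < ... with A_k positive
   on block m_k and let B agree with A_k on block m_k. Then B is positive on infinitely many
   blocks, and B - A_n meets only the blocks m_0, ..., m_{n-1}. *)

instance bool :: second_countable_topology
  by standard (auto intro!: exI[of _ UNIV] generate_topology.Basis simp: fun_eq_iff open_discrete)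

lemma pred_borel_apply [measurable]: "Measurable.pred borel (\<lambda>x::'a::countable \<Rightarrow> bool. x i)"
proof -
  have "open ((\<lambda>x::'a \<Rightarrow> bool. x i) -` {True})"
    by (rule open_vimage) (auto simp: open_discrete)
  then show ?thesis
    by (simp add: pred_def vimage_def)
qed

lemma borel_measurable_bool_iff: "(P :: 'a \<Rightarrow> bool) \<in> borel_measurable M \<longleftrightarrow> Measurable.pred M P"
proof -
  have "borel_measurable M = measurable M (count_space UNIV :: bool measure)"
    by (rule measurable_cong_sets) (simp_all add: sets_borel_eq_count_space)
  then show ?thesis
    by simp
qed

lemma pred_finite_nat:
  fixes P :: "nat \<Rightarrow> 'a \<Rightarrow> bool"
  assumes "\<And>n. Measurable.pred M (P n)"
  shows "Measurable.pred M (\<lambda>x. finite {n. P n x})"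
proof -
  have "finite {n. P n x} \<longleftrightarrow> (\<exists>m. \<forall>n. P n x \<longrightarrow> n \<le> m)" for x
    by (simp add: finite_nat_set_iff_bounded_le)
  then show ?thesis
    using assms by simp measurable
qed

lemma pred_of_finite_subset:
  assumes "finite F" and "\<And>i. Measurable.pred M (\<lambda>x. g x i)"
  shows "Measurable.pred M (\<lambda>x. P {i\<in>F. g x i})"
proof -
  have "P {i\<in>F. g x i} \<longleftrightarrow> (\<exists>S\<in>Pow F. P S \<and> (\<forall>i\<in>F. g x i \<longleftrightarrow> i \<in> S))" for x
    by (auto intro!: bexI[of _ "{i\<in>F. g x i}"] elim!: back_subst[of P])
  then show ?thesis
    using assms by simp measurable
qed

lemma compact_Cantor_space: "compact (UNIV :: ('a \<Rightarrow> bool) set)"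
  using compact_space_product_topology[of "\<lambda>_::'a. euclidean :: bool topology" UNIV]
  by (simp add: euclidean_product_topology compact_space_def finite_imp_compact)

lemma closed_Cantor_coordinate: "closed {y::'a \<Rightarrow> bool. y i}"
proof -
  have "closed ((\<lambda>y::'a \<Rightarrow> bool. y i) -` {True})"
    by (rule closed_vimage) auto
  then show ?thesis
    by (simp add: vimage_def)
qed

lemma ideal_on_subset: "ideal_on X I \<Longrightarrow> A \<in> I \<Longrightarrow> B \<subseteq> A \<Longrightarrow> B \<in> I"
  unfolding ideal_on_def by blast

lemma ideal_on_empty: "ideal_on X I \<Longrightarrow> {} \<in> I"
  unfolding ideal_on_def by blast

lemma ideal_on_Un: "ideal_on X I \<Longrightarrow> A \<in> I \<Longrightarrow> B \<in> I \<Longrightarrow> A \<union> B \<in> I"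
  unfolding ideal_on_def by blast

lemma Diff_finite_notin_ideal:
  assumes "ideal_on X I" "contains_fin I" "A \<notin> I" "finite F"
  shows "A - F \<notin> I"
proof
  assume "A - F \<in> I"
  moreover have "F \<in> I"
    using assms(2,4) unfolding contains_fin_def by blast
  ultimately have "(A - F) \<union> F \<in> I"
    using ideal_on_Un[OF assms(1)] by blast
  then show False
    using ideal_on_subset[OF assms(1)] assms(3) by blast
qed

lemma uniformly_weakly_PplusI:
  fixes \<Phi> :: "(nat \<Rightarrow> nat \<Rightarrow> bool) \<Rightarrow> nat \<Rightarrow> bool"
  assumes "\<And>j. Measurable.pred borel (\<lambda>x. \<Phi> x j)"
    and "\<And>A. (\<And>n. A n \<notin> I) \<Longrightarrow> decseq A \<Longrightarrow>
           {k. \<Phi> (\<lambda>n. chi (A n)) k} \<notin> I \<and> (\<forall>n. {k. \<Phi> (\<lambda>n. chi (A n)) k} - A n \<in> I)"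
  shows "uniformly_weakly_Pplus I"
  unfolding uniformly_weakly_Pplus_def Let_def
proof (intro exI[of _ \<Phi>] conjI)
  show "\<Phi> \<in> borel_measurable borel"
    by (rule measurable_coordinatewise_then_product) (simp add: borel_measurable_bool_iff assms(1))
  show "\<forall>A. (\<forall>n. A n \<notin> I) \<and> (\<forall>n. A (Suc n) \<subseteq> A n) \<longrightarrow>
      {k. \<Phi> (\<lambda>n. chi (A n)) k} \<notin> I \<and> (\<forall>n. {k. \<Phi> (\<lambda>n. chi (A n)) k} - A n \<in> I)"
    using assms(2) by (simp add: decseq_Suc_iff)
qed

locale finitary_union_ideal =
  fixes I :: "nat set set" and K :: "nat \<Rightarrow> nat set \<Rightarrow> bool"
  assumes ideal: "ideal_on UNIV I" and contains_fin: "contains_fin I"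
    and mem_iff: "A \<in> I \<longleftrightarrow> (\<exists>m. K m A)"
    and K_subset: "K m A \<Longrightarrow> B \<subseteq> A \<Longrightarrow> K m B"
    and K_finitary: "(\<And>k. K m (A \<inter> {..<k})) \<Longrightarrow> K m A"
begin

(* {j\<in>D. K m (D \<inter> {..<j})} is the shortest initial segment of D outside K m. *)

lemma escaping_segment:
  assumes "\<not> K m D"
  shows "finite {j\<in>D. K m (D \<inter> {..<j})}" and "\<not> K m {j\<in>D. K m (D \<inter> {..<j})}"
proof -
  define L where "L = (LEAST k. \<not> K m (D \<inter> {..<k}))"
  have "\<exists>k. \<not> K m (D \<inter> {..<k})"
    using K_finitary assms by blast
  then have not_K_L: "\<not> K m (D \<inter> {..<L})"
    unfolding L_def by (rule LeastI_ex)
  have "K m (D \<inter> {..<j}) \<longleftrightarrow> j < L" for j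
  proof
    assume "K m (D \<inter> {..<j})"
    then show "j < L"
      using not_K_L K_subset[of m "D \<inter> {..<j}" "D \<inter> {..<L}"] by fastforce
  next
    assume "j < L"
    then show "K m (D \<inter> {..<j})"
      unfolding L_def by (rule not_less_Least[THEN notnotD])
  qed
  then have "{j\<in>D. K m (D \<inter> {..<j})} = D \<inter> {..<L}"
    by auto
  then show "finite {j\<in>D. K m (D \<inter> {..<j})}" and "\<not> K m {j\<in>D. K m (D \<inter> {..<j})}"
    using not_K_L by simp_all
qed

lemma escaping_diagonal:
  assumes A_pos: "\<And>n. A n \<notin> I" and "decseq A"
  defines "F \<equiv> \<lambda>n. {j\<in>A n - {..<n}. K n ((A n - {..<n}) \<inter> {..<j})}"
  shows "(\<Union>m. F m) \<notin> I" and "(\<Union>m. F m) - A n \<in> I"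
proof -
  have "\<not> K n (A n - {..<n})" for n
    using mem_iff Diff_finite_notin_ideal[OF ideal contains_fin A_pos] by blast
  then have F_finite: "finite (F n)" and F_notin: "\<not> K n (F n)" for n
    unfolding F_def by (rule escaping_segment)+
  show "(\<Union>m. F m) \<notin> I"
  proof
    assume "(\<Union>m. F m) \<in> I"
    then obtain m where "K m (\<Union>m. F m)"
      using mem_iff by blast
    then have "K m (F m)"
      using K_subset by blast
    then show False
      using F_notin by blast
  qed
  have "(\<Union>m. F m) - A n \<subseteq> (\<Union>m<n. F m)"
  proof
    fix j assume "j \<in> (\<Union>m. F m) - A n"
    then obtain m where "j \<in> F m" "j \<notin> A n"
      by blast
    then have "j \<in> A m"
      by (simp add: F_def)
    then have "m < n"
      using decseqD[OF \<open>decseq A\<close>, of n m] \<open>j \<notin> A n\<close> by (meson not_less subsetD)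
    then show "j \<in> (\<Union>m<n. F m)"
      using \<open>j \<in> F m\<close> by blast
  qed
  moreover have "finite (\<Union>m<n. F m)"
    using F_finite by simp
  ultimately show "(\<Union>m. F m) - A n \<in> I"
    using contains_fin unfolding contains_fin_def by (meson finite_subset)
qed

theorem uniformly_weakly_Pplus: "uniformly_weakly_Pplus I"
proof -
  define \<Phi> where "\<Phi> x j \<longleftrightarrow> (\<exists>n\<le>j. x n j \<and> K n {i\<in>{n..<j}. x n i})"
    for x :: "nat \<Rightarrow> nat \<Rightarrow> bool" and j
  show ?thesis
  proof (rule uniformly_weakly_PplusI)
    show "Measurable.pred borel (\<lambda>x. \<Phi> x j)" for j
    proof -
      have [measurable]: "Measurable.pred borel (\<lambda>x::nat \<Rightarrow> nat \<Rightarrow> bool. K n {i\<in>{n..<j}. x n i})" for n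
        by (rule pred_of_finite_subset) (simp, measurable)
      show ?thesis
        unfolding \<Phi>_def by measurable
    qed
  next
    fix A :: "nat \<Rightarrow> nat set"
    assume "\<And>n. A n \<notin> I" and "decseq A"
    have "{i\<in>{n..<j}. chi (A n) i} = (A n - {..<n}) \<inter> {..<j}" for n j
      by (auto simp: chi_def)
    then have "{k. \<Phi> (\<lambda>n. chi (A n)) k} = (\<Union>n. {j\<in>A n - {..<n}. K n ((A n - {..<n}) \<inter> {..<j})})"
      unfolding \<Phi>_def by (auto simp: chi_def)
    then show "{k. \<Phi> (\<lambda>n. chi (A n)) k} \<notin> I \<and> (\<forall>n. {k. \<Phi> (\<lambda>n. chi (A n)) k} - A n \<in> I)"
      using escaping_diagonal[OF \<open>\<And>n. A n \<notin> I\<close> \<open>decseq A\<close>] by simp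
  qed
qed

end

definition finitely_dominated :: "(nat \<Rightarrow> bool) set \<Rightarrow> nat set \<Rightarrow> bool" where
  "finitely_dominated C A \<longleftrightarrow> (\<forall>k. \<exists>y\<in>C. \<forall>i\<in>A. i < k \<longrightarrow> y i)"

lemma finitely_dominated_subset:
  "finitely_dominated C A \<Longrightarrow> B \<subseteq> A \<Longrightarrow> finitely_dominated C B"
  unfolding finitely_dominated_def by (meson subsetD)

lemma finitely_dominated_if_initial_segments:
  assumes "\<And>k. finitely_dominated C (A \<inter> {..<k})"
  shows "finitely_dominated C A"
  unfolding finitely_dominated_def
proof
  fix k
  obtain y where "y \<in> C" "\<forall>i\<in>A \<inter> {..<k}. i < k \<longrightarrow> y i"
    using assms[of k] unfolding finitely_dominated_def by blast
  then show "\<exists>y\<in>C. \<forall>i\<in>A. i < k \<longrightarrow> y i"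
    by auto
qed

lemma closed_finitely_dominated_dominated:
  assumes "closed C" and "finitely_dominated C A"
  shows "\<exists>y\<in>C. \<forall>i\<in>A. y i"
proof -
  define F where "F k = C \<inter> (\<Inter>i\<in>A \<inter> {..<k}. {y. y i})" for k
  have "UNIV \<inter> (\<Inter>k. F k) \<noteq> {}"
  proof (rule compact_imp_fip_image[OF compact_Cantor_space])
    show "closed (F k)" for k
      unfolding F_def by (intro closed_Int closed_INT ballI assms(1) closed_Cantor_coordinate)
    fix N :: "nat set" assume "finite N"
    have "F (Max N) \<subseteq> F k" if "k \<in> N" for k
      using Max_ge[OF \<open>finite N\<close> that] unfolding F_def by auto
    moreover have "F (Max N) \<noteq> {}"
      using assms(2)[unfolded finitely_dominated_def, rule_format, of "Max N"]
      unfolding F_def by auto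
    ultimately show "UNIV \<inter> (\<Inter>k\<in>N. F k) \<noteq> {}"
      by (cases "N = {}") blast+
  qed
  then show ?thesis
    unfolding F_def by blast
qed

lemma uniformly_weakly_Pplus_if_fsigma:
  assumes ideal: "ideal_on UNIV I" "contains_fin I"
    and "fsigma_in euclidean (chi ` I)"
  shows "uniformly_weakly_Pplus I"
proof -
  obtain C where "\<forall>m. closedin euclidean (C m)" "\<forall>m. C m \<subseteq> C (Suc m)"
      and C_Union: "(\<Union>m. C m) = chi ` I"
    using assms(3) unfolding fsigma_in_ascending by (elim exE conjE)
  then have C_closed: "\<And>m. closed (C m)"
    unfolding closed_closedin by blast
  have "A \<in> I \<longleftrightarrow> (\<exists>m. finitely_dominated (C m) A)" for A
  proof
    assume "A \<in> I"
    then have "chi A \<in> (\<Union>m. C m)"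
      unfolding C_Union by (rule imageI)
    then show "\<exists>m. finitely_dominated (C m) A"
      unfolding finitely_dominated_def by (auto simp: chi_def)
  next
    assume "\<exists>m. finitely_dominated (C m) A"
    then obtain m y where "y \<in> C m" and A_y: "\<forall>i\<in>A. y i"
      using closed_finitely_dominated_dominated[OF C_closed] by blast
    then have "y \<in> chi ` I"
      unfolding C_Union[symmetric] by blast
    then obtain E where "E \<in> I" "y = chi E" ..
    moreover have "A \<subseteq> E"
      using A_y \<open>y = chi E\<close> by (auto simp: chi_def)
    ultimately show "A \<in> I"
      using ideal_on_subset[OF ideal(1)] by blast
  qed
  then show ?thesis
    using ideal finitely_dominated_subset finitely_dominated_if_initial_segments
    by (intro finitary_union_ideal.uniformly_weakly_Pplus[of I "\<lambda>m. finitely_dominated (C m)"])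
      (unfold_locales, blast+)
qed

primrec large_block :: "(nat \<Rightarrow> nat set \<Rightarrow> bool) \<Rightarrow> (nat \<Rightarrow> nat \<Rightarrow> bool) \<Rightarrow> nat \<Rightarrow> nat" where
  "large_block small x 0 = (LEAST m. \<not> small m {j. x 0 j})"
| "large_block small x (Suc k) = (LEAST m. large_block small x k < m \<and> \<not> small m {j. x (Suc k) j})"

lemma measurable_large_block:
  assumes "\<And>m. Measurable.pred borel (\<lambda>y::nat \<Rightarrow> bool. small m {j. y j})"
  shows "(\<lambda>x. large_block small x k) \<in> measurable borel (count_space UNIV)"
proof -
  have [measurable]: "Measurable.pred borel (\<lambda>x::nat \<Rightarrow> nat \<Rightarrow> bool. small m {j. x k j})" for m k
    using measurable_compose[OF _ assms[of m], of "\<lambda>x. x k" borel] by simp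
  show ?thesis
  proof (induction k)
    case 0
    show ?case
      by simp measurable
  next
    case (Suc k)
    note [measurable] = Suc.IH
    show ?case
      by simp measurable
  qed
qed

lemma large_block_strict_mono_not_small:
  fixes A :: "nat \<Rightarrow> nat set"
  assumes "\<And>k. infinite {m. \<not> small m (A k)}"
  defines "M \<equiv> large_block small (\<lambda>k j. j \<in> A k)"
  shows "strict_mono M" and "\<not> small (M k) (A k)"
proof -
  have step: "M k < M (Suc k) \<and> \<not> small (M (Suc k)) (A (Suc k))" for k
  proof -
    have "\<exists>m. M k < m \<and> \<not> small m (A (Suc k))"
      using assms(1)[of "Suc k"] unfolding infinite_nat_iff_unbounded by blast
    moreover have "M (Suc k) = (LEAST m. M k < m \<and> \<not> small m (A (Suc k)))"
      by (simp add: M_def)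
    ultimately show ?thesis
      using LeastI_ex by simp
  qed
  then show "strict_mono M"
    by (simp add: strict_mono_Suc_iff)
  have "\<exists>m. \<not> small m (A 0)"
    using assms(1)[of 0] not_finite_existsD by blast
  moreover have "M 0 = (LEAST m. \<not> small m (A 0))"
    by (simp add: M_def)
  ultimately have "\<not> small (M 0) (A 0)"
    using LeastI_ex by simp
  with step show "\<not> small (M k) (A k)"
    by (cases k) auto
qed

locale block_sum_ideal =
  fixes I :: "nat set set" and small :: "nat \<Rightarrow> nat set \<Rightarrow> bool" and S :: "nat \<Rightarrow> nat set"
  assumes ideal: "ideal_on UNIV I"
    and mem_iff: "A \<in> I \<longleftrightarrow> finite {m. \<not> small m A}"
    and small_local: "small m A \<longleftrightarrow> small m (A \<inter> S m)"
    and disjoint_blocks: "disjoint_family S"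
    and small_borel: "Measurable.pred borel (\<lambda>y::nat \<Rightarrow> bool. small m {j. y j})"
begin

lemma small_cong: "A \<inter> S m = A' \<inter> S m \<Longrightarrow> small m A \<longleftrightarrow> small m A'"
  using small_local[of m A] small_local[of m A'] by simp

lemma Union_blocks_mem:
  assumes "finite N"
  shows "(\<Union>m\<in>N. S m) \<in> I"
proof -
  have "small m (\<Union>m\<in>N. S m) \<longleftrightarrow> small m {}" if "m \<notin> N" for m
  proof (rule small_cong)
    have "S m' \<inter> S m = {}" if "m' \<in> N" for m'
      using disjoint_family_onD[OF disjoint_blocks, of m' m] that \<open>m \<notin> N\<close> by auto
    then show "(\<Union>m\<in>N. S m) \<inter> S m = {} \<inter> S m"
      by blast
  qed
  then have "{m. \<not> small m (\<Union>m\<in>N. S m)} \<subseteq> N \<union> {m. \<not> small m {}}"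
    by blast
  moreover have "finite {m. \<not> small m {}}"
    using mem_iff[of "{}"] ideal_on_empty[OF ideal] by simp
  ultimately show ?thesis
    using mem_iff \<open>finite N\<close> by (meson finite_Un finite_subset)
qed

lemma block_diagonal:
  assumes "strict_mono M" and M_large: "\<And>k. \<not> small (M k) (A k)" and "decseq A"
  defines "B \<equiv> \<Union>k. S (M k) \<inter> A k"
  shows "B \<notin> I" and "B - A n \<in> I"
proof -
  have "inj M"
    using \<open>strict_mono M\<close> by (rule strict_mono_imp_inj_on)
  have "B \<inter> S (M k) = A k \<inter> S (M k)" for k
  proof (intro equalityI subsetI)
    fix j assume "j \<in> B \<inter> S (M k)"
    then obtain k' where "j \<in> S (M k')" "j \<in> A k'" "j \<in> S (M k)"
      unfolding B_def by blast
    then have "S (M k') \<inter> S (M k) \<noteq> {}"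
      by blast
    then have "k' = k"
      using disjoint_family_onD[OF disjoint_blocks] injD[OF \<open>inj M\<close>] by blast
    then show "j \<in> A k \<inter> S (M k)"
      using \<open>j \<in> A k'\<close> \<open>j \<in> S (M k)\<close> by simp
  qed (auto simp: B_def)
  then have "range M \<subseteq> {m. \<not> small m B}"
    using M_large small_cong by blast
  moreover have "infinite (range M)"
    using \<open>inj M\<close> by (rule range_inj_infinite)
  ultimately show "B \<notin> I"
    using mem_iff[of B] finite_subset by blast
  have "B - A n \<subseteq> (\<Union>m\<in>M ` {..<n}. S m)"
  proof
    fix j assume "j \<in> B - A n"
    then obtain k where "j \<in> S (M k)" "j \<in> A k" "j \<notin> A n"
      unfolding B_def by blast
    then have "k < n"
      using decseqD[OF \<open>decseq A\<close>, of n k] by (meson not_less subsetD)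
    then show "j \<in> (\<Union>m\<in>M ` {..<n}. S m)"
      using \<open>j \<in> S (M k)\<close> by blast
  qed
  moreover have "(\<Union>m\<in>M ` {..<n}. S m) \<in> I"
    by (rule Union_blocks_mem) simp
  ultimately show "B - A n \<in> I"
    using ideal_on_subset[OF ideal] by blast
qed

theorem uniformly_weakly_Pplus: "uniformly_weakly_Pplus I"
proof -
  define \<Phi> where "\<Phi> x j \<longleftrightarrow> (\<exists>k. j \<in> S (large_block small x k) \<and> x k j)"
    for x :: "nat \<Rightarrow> nat \<Rightarrow> bool" and j
  show ?thesis
  proof (rule uniformly_weakly_PplusI)
    have [measurable]: "(\<lambda>x. large_block small x k) \<in> measurable borel (count_space UNIV)" for k
      by (rule measurable_large_block[OF small_borel])
    show "Measurable.pred borel (\<lambda>x. \<Phi> x j)" for j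
      unfolding \<Phi>_def by measurable
  next
    fix A :: "nat \<Rightarrow> nat set"
    assume "\<And>n. A n \<notin> I" and "decseq A"
    define M where "M = large_block small (\<lambda>k j. j \<in> A k)"
    have "infinite {m. \<not> small m (A k)}" for k
      using \<open>\<And>n. A n \<notin> I\<close>[of k] mem_iff[of "A k"] by simp
    then have "strict_mono M" and "\<not> small (M k) (A k)" for k
      unfolding M_def by (rule large_block_strict_mono_not_small)+
    moreover have "{k. \<Phi> (\<lambda>n. chi (A n)) k} = (\<Union>k. S (M k) \<inter> A k)"
      unfolding \<Phi>_def M_def chi_def by auto
    ultimately show "{k. \<Phi> (\<lambda>n. chi (A n)) k} \<notin> I \<and> (\<forall>n. {k. \<Phi> (\<lambda>n. chi (A n)) k} - A n \<in> I)"
      using block_diagonal \<open>decseq A\<close> by simp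
  qed
qed

end

definition sum_carrier :: "(nat \<Rightarrow> nat list set) \<Rightarrow> nat list set" where
  "sum_carrier Y = (\<Union>n. (\<lambda>y. n # y) ` Y n)"

definition fubini_sum :: "(nat \<Rightarrow> nat list set) \<Rightarrow> (nat \<Rightarrow> nat list set set) \<Rightarrow> nat list set set" where
  "fubini_sum Y J = {A. A \<subseteq> sum_carrier Y \<and> finite {n. section_of A n \<notin> J n}}"

(* Borelness of J along every map into nat, so that it survives both the isomorphism onto
   nat and the restriction to a section. *)
definition borel_pullbacks :: "'a set \<Rightarrow> 'a set set \<Rightarrow> bool" where
  "borel_pullbacks X J \<longleftrightarrow>
     (\<forall>h :: 'a \<Rightarrow> nat. Measurable.pred borel (\<lambda>x::nat \<Rightarrow> bool. h -` {j. x j} \<inter> X \<in> J))"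

lemma section_of_vimage_sum_carrier:
  "section_of (h -` A \<inter> sum_carrier Y) n = (\<lambda>y. h (n # y)) -` A \<inter> Y n"
  by (auto simp: section_of_def sum_carrier_def)

lemma disjoint_family_image_sum_carrier:
  assumes "inj_on f (sum_carrier Y)"
  shows "disjoint_family (\<lambda>m. f ` (\<lambda>y. m # y) ` Y m)"
  unfolding disjoint_family_on_def
proof (intro ballI impI)
  fix m m' :: nat assume "m \<noteq> m'"
  have sub: "(\<lambda>y. k # y) ` Y k \<subseteq> sum_carrier Y" for k
    by (auto simp: sum_carrier_def)
  have "(\<lambda>y. m # y) ` Y m \<inter> (\<lambda>y. m' # y) ` Y m' = {}"
    using \<open>m \<noteq> m'\<close> by auto
  then show "f ` (\<lambda>y. m # y) ` Y m \<inter> f ` (\<lambda>y. m' # y) ` Y m' = {}"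
    using inj_on_image_Int[OF assms sub sub, of m m'] by simp
qed

lemma borel_pullbacks_singleton: "borel_pullbacks {a} {{}}"
proof -
  have "h -` {j. x j} \<inter> {a} \<in> {{}} \<longleftrightarrow> \<not> x (h a)" for h :: "'a \<Rightarrow> nat" and x
    by auto
  then show ?thesis
    unfolding borel_pullbacks_def by simp
qed

lemma borel_pullbacks_fubini_sum:
  assumes "\<And>n. borel_pullbacks (Y n) (J n)"
  shows "borel_pullbacks (sum_carrier Y) (fubini_sum Y J)"
  unfolding borel_pullbacks_def
proof
  fix h :: "nat list \<Rightarrow> nat"
  have "h -` {j. x j} \<inter> sum_carrier Y \<in> fubini_sum Y J \<longleftrightarrow>
      finite {n. \<not> ((\<lambda>y. h (n # y)) -` {j. x j} \<inter> Y n \<in> J n)}" for x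
    unfolding fubini_sum_def mem_Collect_eq section_of_vimage_sum_carrier by simp
  moreover have "Measurable.pred borel (\<lambda>x::nat \<Rightarrow> bool. (\<lambda>y. h (n # y)) -` {j. x j} \<inter> Y n \<in> J n)" for n
    using assms unfolding borel_pullbacks_def by blast
  ultimately show "Measurable.pred borel (\<lambda>x. h -` {j. x j} \<inter> sum_carrier Y \<in> fubini_sum Y J)"
    by (simp add: pred_finite_nat)
qed

lemma fin_one_eq_fubini_sum:
  "range (\<lambda>n. [n]) = sum_carrier (\<lambda>_. {[]})"
  "{A. A \<subseteq> range (\<lambda>n. [n]) \<and> finite A} = fubini_sum (\<lambda>_. {[]}) (\<lambda>_. {{}})"
proof -
  show carrier: "range (\<lambda>n. [n]) = sum_carrier (\<lambda>_. {[]})"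
    by (auto simp: sum_carrier_def)
  have "finite A \<longleftrightarrow> finite {n. section_of A n \<notin> {{}}}" if A_sub: "A \<subseteq> range (\<lambda>n. [n])"
    for A :: "nat list set"
  proof -
    have "A = (\<lambda>n. [n]) ` {n. section_of A n \<notin> {{}}}"
    proof (intro equalityI subsetI)
      fix x assume "x \<in> A"
      moreover obtain n where "x = [n]"
        using A_sub \<open>x \<in> A\<close> by blast
      ultimately show "x \<in> (\<lambda>n. [n]) ` {n. section_of A n \<notin> {{}}}"
        by (intro image_eqI[of _ _ n]) (auto simp: section_of_def)
    qed (use A_sub in \<open>auto simp: section_of_def\<close>)
    moreover have "inj (\<lambda>n::nat. [n])"
      by (simp add: inj_def)
    ultimately show ?thesis
      by (metis finite_imageD finite_imageI inj_on_subset subset_UNIV)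
  qed
  then show "{A. A \<subseteq> range (\<lambda>n. [n]) \<and> finite A} = fubini_sum (\<lambda>_. {[]}) (\<lambda>_. {{}})"
    unfolding fubini_sum_def carrier[symmetric] by blast
qed

lemma borel_pullbacks_fin_pow: "fin_pow r X J \<Longrightarrow> borel_pullbacks X J"
proof (induction rule: fin_pow.induct)
  case (one r)
  show ?case
    unfolding fin_one_eq_fubini_sum(2) unfolding fin_one_eq_fubini_sum(1)
    by (intro borel_pullbacks_fubini_sum borel_pullbacks_singleton)
next
  case (succ r X J r' m)
  then show ?case
    using borel_pullbacks_fubini_sum[of "\<lambda>_. X" "\<lambda>_. J"]
    by (simp add: sum_carrier_def fubini_sum_def)
next
  case (limit s X J r)
  then show ?case
    using borel_pullbacks_fubini_sum[of X J]
    by (simp add: sum_carrier_def fubini_sum_def)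
qed

lemma fin_pow_eq_fubini_sum:
  assumes "fin_pow r X J"
  obtains Y JJ where "X = sum_carrier Y" "J = fubini_sum Y JJ" "\<And>n. borel_pullbacks (Y n) (JJ n)"
  using assms
proof cases
  case one
  show ?thesis
  proof (rule that)
    show "X = sum_carrier (\<lambda>_. {[]})"
      by (simp only: one fin_one_eq_fubini_sum(1))
    show "J = fubini_sum (\<lambda>_. {[]}) (\<lambda>_. {{}})"
      by (simp only: one fin_one_eq_fubini_sum(2))
  qed (rule borel_pullbacks_singleton)
next
  case (succ r0 X0 J0 m)
  show ?thesis
  proof (rule that)
    show "X = sum_carrier (\<lambda>_. X0)" "J = fubini_sum (\<lambda>_. X0) (\<lambda>_. J0)"
      by (simp_all only: succ sum_carrier_def fubini_sum_def)
    show "borel_pullbacks X0 J0"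
      by (rule borel_pullbacks_fin_pow) (rule succ)
  qed
next
  case (limit s X0 J0)
  show ?thesis
  proof (rule that)
    show "X = sum_carrier X0" "J = fubini_sum X0 J0"
      by (simp_all only: limit sum_carrier_def fubini_sum_def)
    show "borel_pullbacks (X0 n) (J0 n)" for n
      using limit by (intro borel_pullbacks_fin_pow) blast
  qed
qed

lemma uniformly_weakly_Pplus_if_iso_fubini_sum:
  assumes ideal: "ideal_on UNIV I"
    and iso: "ideal_iso (sum_carrier Y) (fubini_sum Y J) (UNIV :: nat set) I"
    and borel: "\<And>n. borel_pullbacks (Y n) (J n)"
  shows "uniformly_weakly_Pplus I"
proof -
  obtain f where bij: "bij_betw f (sum_carrier Y) UNIV"
    and f_iso: "\<And>A. A \<in> I \<longleftrightarrow> f -` A \<inter> sum_carrier Y \<in> fubini_sum Y J"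
    using iso unfolding ideal_iso_def by blast
  have "inj_on f (sum_carrier Y)"
    using bij by (rule bij_betw_imp_inj_on)
  define small where "small m A \<longleftrightarrow> (\<lambda>y. f (m # y)) -` A \<inter> Y m \<in> J m" for m A
  define S where "S m = f ` (\<lambda>y. m # y) ` Y m" for m
  show ?thesis
  proof (rule block_sum_ideal.uniformly_weakly_Pplus[of I small S], unfold_locales)
    show "ideal_on UNIV I"
      by (fact ideal)
    show "A \<in> I \<longleftrightarrow> finite {m. \<not> small m A}" for A
      by (simp add: f_iso fubini_sum_def small_def section_of_vimage_sum_carrier)
    show "small m A \<longleftrightarrow> small m (A \<inter> S m)" for m A
    proof -
      have "(\<lambda>y. f (m # y)) -` A \<inter> Y m = (\<lambda>y. f (m # y)) -` (A \<inter> S m) \<inter> Y m"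
        by (auto simp: S_def)
      then show ?thesis
        by (simp add: small_def)
    qed
    show "disjoint_family S"
      unfolding S_def using \<open>inj_on f (sum_carrier Y)\<close> by (rule disjoint_family_image_sum_carrier)
    show "Measurable.pred borel (\<lambda>x. small m {j. x j})" for m
      using borel[of m] unfolding borel_pullbacks_def small_def by blast
  qed
qed

theorem lemma5p3:
  fixes I :: "nat set set"
  assumes "ideal_on (UNIV :: nat set) I"
    and "contains_fin I"
    and "fsigma_in euclidean (chi ` I) \<or>
         (\<exists>r X J. fin_pow r X J \<and> ideal_iso X J (UNIV :: nat set) I)"
  shows "uniformly_weakly_Pplus I"
  using assms(3)
proof
  assume "fsigma_in euclidean (chi ` I)"
  with assms(1,2) show ?thesis
    by (rule uniformly_weakly_Pplus_if_fsigma)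
next
  assume "\<exists>r X J. fin_pow r X J \<and> ideal_iso X J (UNIV :: nat set) I"
  then obtain r X J where "fin_pow r X J" and iso: "ideal_iso X J (UNIV :: nat set) I"
    by blast
  obtain Y JJ where "X = sum_carrier Y" "J = fubini_sum Y JJ"
    and borel: "\<And>n. borel_pullbacks (Y n) (JJ n)"
    using fin_pow_eq_fubini_sum[OF \<open>fin_pow r X J\<close>] by blast
  with iso have "ideal_iso (sum_carrier Y) (fubini_sum Y JJ) (UNIV :: nat set) I"
    by simp
  with assms(1) show ?thesis
    using borel by (rule uniformly_weakly_Pplus_if_iso_fubini_sum)
qed

end
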